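(* Let $G$ be a finite group and let $R\colon\mathcal{I}_G\text{-spaces}\to\mathcal{I}\text{-}G\text{spaces}$ be restriction along $\iota\colon\mathcal{I}\to\mathcal{I}_G$, with left adjoint $E$ given by left Kan extension along $\iota$. Then the counit $\epsilon\colon ER\to\mathrm{Id}_{\mathcal{I}_G\text{-spaces}}$ is a natural isomorphism.
   Context: $\mathcal{I}_G$: objects $(\mathbb{R}^n,\rho)$, $\rho\colon G\to O(n)$ a homomorphism; morphisms all linear isometric isomorphisms, with disjoint basepoint and conjugation $G$-action. $\mathcal{T}op_G$: based $G$-spaces and all based maps with conjugation $G$-action. An $\mathcal{I}_G$-space is a $G$-continuous functor $\mathcal{I}_G\to\mathcal{T}op_G$ (i.e. $A(gfg^{-1})=gA(f)g^{-1}$), with morphisms the natural transformations having $G$-equivariant components. $\mathcal{I}=\mathcal{I}_e$; $\iota\colon\mathcal{I}\to\mathcal{I}_G$ gives $\mathbb{R}^n$ the trivial action. An $\mathcal{I}$-$G$space is a continuous functor from $\mathcal{I}$ to based $G$-spaces and equivariant maps. For an $\mathcal{I}$-$G$space $X$ and $V\in\mathcal{I}_G$, $EX(V)=\coprod_n\mathcal{I}_G(\mathbb{R}^n,V)\times X(\mathbb{R}^n)/\sim$, where $[st,x]\sim[s,t_*x]$ for $t$ a morphism of $\mathcal{I}$, with diagonal $G$-action. For an $\mathcal{I}_G$-space $A$, the counit component $\epsilon_A\colon ERA(V)\to A(V)$ is $[s,a]\mapsto s_*a=A(s)(a)$. *)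

theory Defs
  imports "HOL-Analysis.Analysis" "HOL-Algebra.Group"
begin

text \<open>An n x n real matrix is an element of the extensional function space on
 {..<n} x {..<n}; it represents a linear map R^n -> R^n on column vectors.\<close>

type_synonym mat = "nat \<times> nat \<Rightarrow> real"

definition Mats :: "nat \<Rightarrow> mat set" where
  "Mats n = PiE ({..<n} \<times> {..<n}) (\<lambda>_. UNIV)"

definition matmul :: "nat \<Rightarrow> mat \<Rightarrow> mat \<Rightarrow> mat" where
  "matmul n M N = (\<lambda>(i,j) \<in> {..<n} \<times> {..<n}. \<Sum>k<n. M (i,k) * N (k,j))"

definition idm :: "nat \<Rightarrow> mat" where
  "idm n = (\<lambda>(i,j) \<in> {..<n} \<times> {..<n}. if i = j then 1 else 0)"

definition transp :: "nat \<Rightarrow> mat \<Rightarrow> mat" where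
  "transp n M = (\<lambda>(i,j) \<in> {..<n} \<times> {..<n}. M (j,i))"

definition Orth :: "nat \<Rightarrow> mat set" where
  "Orth n = {M \<in> Mats n. matmul n (transp n M) M = idm n}"

definition mat_top :: "nat \<Rightarrow> mat topology" where
  "mat_top n = product_topology (\<lambda>_. euclideanreal) ({..<n} \<times> {..<n})"

text \<open>An object (R^n, rho) with rho : G -> O(n) a homomorphism (extensional on carrier G).\<close>
type_synonym 'g obj = "nat \<times> ('g \<Rightarrow> mat)"

definition Obj :: "('g, 'b) monoid_scheme \<Rightarrow> 'g obj set" where
  "Obj G = {(n, \<rho>). \<rho> \<in> extensional (carrier G) \<and> (\<forall>g\<in>carrier G. \<rho> g \<in> Orth n) \<and>
      (\<forall>g\<in>carrier G. \<forall>h\<in>carrier G. \<rho> (g \<otimes>\<^bsub>G\<^esub> h) = matmul n (\<rho> g) (\<rho> h))}"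

text \<open>R^n with trivial action (image of iota : I -> I_G).\<close>
definition trivo :: "('g, 'b) monoid_scheme \<Rightarrow> nat \<Rightarrow> 'g obj" where
  "trivo G n = (n, (\<lambda>g \<in> carrier G. idm n))"

text \<open>Morphisms: all linear isometric isomorphisms (not necessarily equivariant).\<close>
definition Hom :: "'g obj \<Rightarrow> 'g obj \<Rightarrow> mat set" where
  "Hom V W = (if fst V = fst W then Orth (fst V) else {})"

definition Hom_top :: "'g obj \<Rightarrow> 'g obj \<Rightarrow> mat topology" where
  "Hom_top V W = subtopology (mat_top (fst V)) (Hom V W)"

definition conj_hom :: "('g, 'b) monoid_scheme \<Rightarrow> 'g obj \<Rightarrow> 'g obj \<Rightarrow> 'g \<Rightarrow> mat \<Rightarrow> mat" where
  "conj_hom G V W g f = matmul (fst V) (snd W g) (matmul (fst V) f (snd V (inv\<^bsub>G\<^esub> g)))"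

definition based_Gspace :: "('g, 'b) monoid_scheme \<Rightarrow> 'a topology \<Rightarrow> 'a \<Rightarrow> ('g \<Rightarrow> 'a \<Rightarrow> 'a) \<Rightarrow> bool" where
  "based_Gspace G X b a \<longleftrightarrow> b \<in> topspace X \<and>
     (\<forall>g\<in>carrier G. continuous_map X X (a g) \<and> a g b = b) \<and>
     (\<forall>x\<in>topspace X. a \<one>\<^bsub>G\<^esub> x = x) \<and>
     (\<forall>g\<in>carrier G. \<forall>h\<in>carrier G. \<forall>x\<in>topspace X. a (g \<otimes>\<^bsub>G\<^esub> h) x = a g (a h x))"

record ('g, 'a) IGspace =
  sp  :: "'g obj \<Rightarrow> 'a topology"
  bp  :: "'g obj \<Rightarrow> 'a"
  act :: "'g obj \<Rightarrow> 'g \<Rightarrow> 'a \<Rightarrow> 'a"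
  mor :: "'g obj \<Rightarrow> 'g obj \<Rightarrow> mat \<Rightarrow> 'a \<Rightarrow> 'a"

text \<open>A G-continuous (topologically enriched) functor I_G -> Top_G.\<close>
definition IG_space :: "('g, 'b) monoid_scheme \<Rightarrow> ('g, 'a) IGspace \<Rightarrow> bool" where
  "IG_space G A \<longleftrightarrow>
     (\<forall>V\<in>Obj G. based_Gspace G (sp A V) (bp A V) (act A V)) \<and>
     (\<forall>V\<in>Obj G. \<forall>W\<in>Obj G.
        continuous_map (prod_topology (Hom_top V W) (sp A V)) (sp A W) (\<lambda>(f, x). mor A V W f x) \<and>
        (\<forall>f\<in>Hom V W. mor A V W f (bp A V) = bp A W)) \<and>
     (\<forall>V\<in>Obj G. \<forall>x\<in>topspace (sp A V). mor A V V (idm (fst V)) x = x) \<and>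
     (\<forall>U\<in>Obj G. \<forall>V\<in>Obj G. \<forall>W\<in>Obj G. \<forall>f\<in>Hom U V. \<forall>g\<in>Hom V W. \<forall>x\<in>topspace (sp A U).
        mor A U W (matmul (fst U) g f) x = mor A V W g (mor A U V f x)) \<and>
     (\<forall>V\<in>Obj G. \<forall>W\<in>Obj G. \<forall>g\<in>carrier G. \<forall>f\<in>Hom V W. \<forall>x\<in>topspace (sp A V).
        mor A V W (conj_hom G V W g f) x = act A W g (mor A V W f (act A V (inv\<^bsub>G\<^esub> g) x)))"

definition IG_morph :: "('g, 'b) monoid_scheme \<Rightarrow> ('g, 'a) IGspace \<Rightarrow> ('g, 'c) IGspace
                         \<Rightarrow> ('g obj \<Rightarrow> 'a \<Rightarrow> 'c) \<Rightarrow> bool" where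
  "IG_morph G A B \<phi> \<longleftrightarrow>
     (\<forall>V\<in>Obj G. continuous_map (sp A V) (sp B V) (\<phi> V) \<and> \<phi> V (bp A V) = bp B V \<and>
        (\<forall>g\<in>carrier G. \<forall>x\<in>topspace (sp A V). \<phi> V (act A V g x) = act B V g (\<phi> V x))) \<and>
     (\<forall>V\<in>Obj G. \<forall>W\<in>Obj G. \<forall>f\<in>Hom V W. \<forall>x\<in>topspace (sp A V).
        \<phi> W (mor A V W f x) = mor B V W f (\<phi> V x))"

record ('g, 'a) IGsp =
  Isp  :: "nat \<Rightarrow> 'a topology"
  Ibp  :: "nat \<Rightarrow> 'a"
  Iact :: "nat \<Rightarrow> 'g \<Rightarrow> 'a \<Rightarrow> 'a"
  Imor :: "nat \<Rightarrow> nat \<Rightarrow> mat \<Rightarrow> 'a \<Rightarrow> 'a"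

definition Res :: "('g, 'b) monoid_scheme \<Rightarrow> ('g, 'a) IGspace \<Rightarrow> ('g, 'a) IGsp" where
  "Res G A = \<lparr>Isp = (\<lambda>n. sp A (trivo G n)), Ibp = (\<lambda>n. bp A (trivo G n)),
              Iact = (\<lambda>n. act A (trivo G n)),
              Imor = (\<lambda>m n. mor A (trivo G m) (trivo G n))\<rparr>"

definition quot_top :: "'x topology \<Rightarrow> ('x \<Rightarrow> 'y) \<Rightarrow> 'y topology" where
  "quot_top X q = topology (\<lambda>U. U \<subseteq> q ` topspace X \<and> openin X {x \<in> topspace X. q x \<in> U})"

definition coprod :: "('g, 'b) monoid_scheme \<Rightarrow> ('g, 'a) IGsp \<Rightarrow> 'g obj \<Rightarrow> (nat \<times> mat \<times> 'a) topology" where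
  "coprod G X V = sum_topology (\<lambda>n. prod_topology (Hom_top (trivo G n) V) (Isp X n)) UNIV"

definition erel :: "('g, 'b) monoid_scheme \<Rightarrow> ('g, 'a) IGsp \<Rightarrow> 'g obj
                    \<Rightarrow> nat \<times> mat \<times> 'a \<Rightarrow> nat \<times> mat \<times> 'a \<Rightarrow> bool" where
  "erel G X V z z' \<longleftrightarrow> (\<exists>m n s t x. t \<in> Hom (trivo G m) (trivo G n) \<and> s \<in> Hom (trivo G n) V \<and>
       x \<in> topspace (Isp X m) \<and>
       z = (m, matmul m s t, x) \<and> z' = (n, s, Imor X m n t x))"

definition eclass :: "('g, 'b) monoid_scheme \<Rightarrow> ('g, 'a) IGsp \<Rightarrow> 'g obj
                      \<Rightarrow> nat \<times> mat \<times> 'a \<Rightarrow> (nat \<times> mat \<times> 'a) set" where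
  "eclass G X V z = {z'. equivclp (erel G X V) z z'}"

definition E_top :: "('g, 'b) monoid_scheme \<Rightarrow> ('g, 'a) IGsp \<Rightarrow> 'g obj \<Rightarrow> (nat \<times> mat \<times> 'a) set topology" where
  "E_top G X V = quot_top (coprod G X V) (eclass G X V)"

definition E_rep :: "('g, 'b) monoid_scheme \<Rightarrow> ('g, 'a) IGsp \<Rightarrow> 'g obj
                     \<Rightarrow> (nat \<times> mat \<times> 'a) set \<Rightarrow> nat \<times> mat \<times> 'a" where
  "E_rep G X V C = (SOME z. z \<in> topspace (coprod G X V) \<and> eclass G X V z = C)"

text \<open>diagonal G-action: g[s,x] = [g.s, g x], where g.s = rho_V(g) s (source has trivial action)\<close>
definition E_act :: "('g, 'b) monoid_scheme \<Rightarrow> ('g, 'a) IGsp \<Rightarrow> 'g obj \<Rightarrow> 'g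
                     \<Rightarrow> (nat \<times> mat \<times> 'a) set \<Rightarrow> (nat \<times> mat \<times> 'a) set" where
  "E_act G X V g C = (case E_rep G X V C of (n, s, x) \<Rightarrow>
       eclass G X V (n, conj_hom G (trivo G n) V g s, Iact X n g x))"

definition E_bp :: "('g, 'b) monoid_scheme \<Rightarrow> ('g, 'a) IGsp \<Rightarrow> 'g obj \<Rightarrow> (nat \<times> mat \<times> 'a) set" where
  "E_bp G X V = eclass G X V (fst V, idm (fst V), Ibp X (fst V))"

definition E_mor :: "('g, 'b) monoid_scheme \<Rightarrow> ('g, 'a) IGsp \<Rightarrow> 'g obj \<Rightarrow> 'g obj \<Rightarrow> mat
                     \<Rightarrow> (nat \<times> mat \<times> 'a) set \<Rightarrow> (nat \<times> mat \<times> 'a) set" where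
  "E_mor G X V W f C = (case E_rep G X V C of (n, s, x) \<Rightarrow>
       eclass G X W (n, matmul n f s, x))"

definition ER_map :: "('g, 'b) monoid_scheme \<Rightarrow> ('g, 'a) IGspace \<Rightarrow> ('g, 'c) IGspace
                      \<Rightarrow> ('g obj \<Rightarrow> 'a \<Rightarrow> 'c) \<Rightarrow> 'g obj
                      \<Rightarrow> (nat \<times> mat \<times> 'a) set \<Rightarrow> (nat \<times> mat \<times> 'c) set" where
  "ER_map G A B \<phi> V C = (case E_rep G (Res G A) V C of (n, s, x) \<Rightarrow>
       eclass G (Res G B) V (n, s, \<phi> (trivo G n) x))"

definition counit :: "('g, 'b) monoid_scheme \<Rightarrow> ('g, 'a) IGspace \<Rightarrow> 'g obj
                      \<Rightarrow> (nat \<times> mat \<times> 'a) set \<Rightarrow> 'a" where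
  "counit G A V C = (case E_rep G (Res G A) V C of (n, s, x) \<Rightarrow> mor A (trivo G n) V s x)"

end

theory Submission
  imports Defs
begin

text \<open>
  The morphisms of \<open>\<I>\<^sub>G\<close> are all linear isometries, not only the equivariant ones, so
  every object \<open>V = (\<real>\<^sup>n, \<rho>)\<close> is isomorphic in \<open>\<I>\<^sub>G\<close> to \<open>\<iota>(\<real>\<^sup>n)\<close> through the
  identity matrix. Consequently every class \<open>[s, x]\<close> of \<open>ERA(V)\<close> equals \<open>[id, s\<^sub>* x]\<close>, and
  \<open>a \<mapsto> [id, id\<^sub>* a]\<close> is inverse to the counit. Both maps are continuous by the universal
  properties of the coproduct and the quotient topology; the remaining compatibilities are the
  functor laws of \<open>A\<close>.
\<close>

lemma Orth_Mats: "M \<in> Orth n \<Longrightarrow> M \<in> Mats n"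
  by (simp add: Orth_def)

lemma Mats_eqI:
  "M \<in> Mats n \<Longrightarrow> N \<in> Mats n \<Longrightarrow> (\<And>i j. i < n \<Longrightarrow> j < n \<Longrightarrow> M (i,j) = N (i,j)) \<Longrightarrow> M = N"
  unfolding Mats_def by (rule PiE_ext) auto

lemma matmul_Mats: "matmul n M N \<in> Mats n"
  unfolding Mats_def matmul_def by auto

lemma idm_Mats: "idm n \<in> Mats n"
  unfolding Mats_def idm_def by auto

lemma transp_Mats: "transp n M \<in> Mats n"
  unfolding Mats_def transp_def by auto

lemma matmul_idm_left: "M \<in> Mats n \<Longrightarrow> matmul n (idm n) M = M"
  by (rule Mats_eqI[OF matmul_Mats]) (simp_all add: matmul_def idm_def of_bool_def[symmetric])

lemma matmul_idm_right: "M \<in> Mats n \<Longrightarrow> matmul n M (idm n) = M"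
  by (rule Mats_eqI[OF matmul_Mats]) (simp_all add: matmul_def idm_def of_bool_def[symmetric])

lemma matmul_assoc: "matmul n (matmul n A B) C = matmul n A (matmul n B C)"
  by (rule Mats_eqI[OF matmul_Mats matmul_Mats])
    (simp add: matmul_def sum_distrib_left sum_distrib_right mult.assoc, rule sum.swap)

lemma transp_matmul: "transp n (matmul n M N) = matmul n (transp n N) (transp n M)"
  by (rule Mats_eqI[OF transp_Mats matmul_Mats]) (simp add: matmul_def transp_def mult.commute)

lemma idm_Orth: "idm n \<in> Orth n"
proof -
  have "transp n (idm n) = idm n"
    by (rule Mats_eqI[OF transp_Mats idm_Mats]) (auto simp: transp_def idm_def)
  then show ?thesis
    unfolding Orth_def using matmul_idm_left[OF idm_Mats] idm_Mats by simp
qed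

lemma matmul_Orth:
  assumes "M \<in> Orth n" "N \<in> Orth n"
  shows "matmul n M N \<in> Orth n"
proof -
  have "matmul n (transp n (matmul n M N)) (matmul n M N)
      = matmul n (transp n N) (matmul n (matmul n (transp n M) M) N)"
    by (simp add: transp_matmul matmul_assoc)
  also have "\<dots> = idm n"
    using assms by (simp add: Orth_def matmul_idm_left)
  finally show ?thesis
    unfolding Orth_def using matmul_Mats by simp
qed

lemma openin_quot_top:
  "openin (quot_top X q) U \<longleftrightarrow> U \<subseteq> q ` topspace X \<and> openin X {x \<in> topspace X. q x \<in> U}"
proof -
  have Int: "{x \<in> topspace X. q x \<in> S \<inter> T} = {x \<in> topspace X. q x \<in> S} \<inter> {x \<in> topspace X. q x \<in> T}"
    for S T by auto
  have Union: "{x \<in> topspace X. q x \<in> \<Union>\<K>} = (\<Union>U\<in>\<K>. {x \<in> topspace X. q x \<in> U})" for \<K>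
    by auto
  have "istopology (\<lambda>U. U \<subseteq> q ` topspace X \<and> openin X {x \<in> topspace X. q x \<in> U})"
    unfolding istopology_def Int Union by auto
  then show ?thesis
    unfolding quot_top_def by (simp add: topology_inverse')
qed

lemma topspace_quot_top: "topspace (quot_top X q) = q ` topspace X"
proof (rule subset_antisym)
  show "topspace (quot_top X q) \<subseteq> q ` topspace X"
    by (metis openin_quot_top openin_topspace)
  have "openin (quot_top X q) (q ` topspace X)"
    unfolding openin_quot_top by (auto intro: openin_subopen[THEN iffD2])
  then show "q ` topspace X \<subseteq> topspace (quot_top X q)"
    by (rule openin_subset)
qed

lemma quotient_map_quot_top: "quotient_map X (quot_top X q) q"
  unfolding quotient_map_def topspace_quot_top openin_quot_top by auto

lemma continuous_map_from_quot_top: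
  assumes "continuous_map X Y h" and "\<And>x. x \<in> topspace X \<Longrightarrow> f (q x) = h x"
  shows "continuous_map (quot_top X q) Y f"
proof (rule continuous_compose_quotient_map[OF quotient_map_quot_top])
  show "continuous_map X Y (f \<circ> q)"
    using assms by (auto intro: continuous_map_eq)
qed

lemma continuous_map_from_sum_topology:
  assumes "\<And>i. i \<in> I \<Longrightarrow> continuous_map (X i) Y (\<lambda>x. h (i, x))"
  shows "continuous_map (sum_topology X I) Y h"
  unfolding continuous_map_def openin_sum_topology
proof (intro conjI allI impI)
  show "h \<in> topspace (sum_topology X I) \<rightarrow> topspace Y"
    using assms continuous_map_funspace by fastforce
  fix U assume U: "openin Y U"
  show "{z \<in> topspace (sum_topology X I). h z \<in> U} \<subseteq> Sigma I (topspace \<circ> X)"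
    by auto
  have "openin (X i) {x \<in> topspace (X i). h (i, x) \<in> U}" if "i \<in> I" for i
    using assms[OF that] U by (simp add: continuous_map_def)
  moreover have "{x. (i, x) \<in> {z \<in> topspace (sum_topology X I). h z \<in> U}}
      = {x \<in> topspace (X i). h (i, x) \<in> U}" if "i \<in> I" for i
    using that by auto
  ultimately show "\<forall>i\<in>I. openin (X i) {x. (i, x) \<in> {z \<in> topspace (sum_topology X I). h z \<in> U}}"
    by simp
qed

lemma trivo_Obj:
  assumes "group G"
  shows "trivo G n \<in> Obj G"
proof -
  interpret group G by fact
  show ?thesis
    unfolding Obj_def trivo_def using idm_Orth matmul_idm_left[OF idm_Mats] by auto
qed

lemma fst_trivo [simp]: "fst (trivo G n) = n"
  by (simp add: trivo_def)

lemma snd_trivo: "g \<in> carrier G \<Longrightarrow> snd (trivo G n) g = idm n"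
  by (simp add: trivo_def)

lemma Hom_dims: "f \<in> Hom V W \<Longrightarrow> fst W = fst V \<and> f \<in> Orth (fst V)"
  by (simp add: Hom_def split: if_splits)

lemma topspace_Hom_top [simp]: "topspace (Hom_top V W) = Hom V W"
proof -
  have "topspace (mat_top (fst V)) = Mats (fst V)"
    by (simp add: mat_top_def Mats_def)
  then show ?thesis
    unfolding Hom_top_def Hom_def using Orth_Mats by auto
qed

lemma
  assumes "IG_space G A"
  shows IG_space_based: "V \<in> Obj G \<Longrightarrow> based_Gspace G (sp A V) (bp A V) (act A V)"
    and IG_space_continuous_mor: "V \<in> Obj G \<Longrightarrow> W \<in> Obj G \<Longrightarrow>
      continuous_map (prod_topology (Hom_top V W) (sp A V)) (sp A W) (\<lambda>(f, x). mor A V W f x)"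
    and IG_space_mor_bp: "V \<in> Obj G \<Longrightarrow> W \<in> Obj G \<Longrightarrow> f \<in> Hom V W \<Longrightarrow> mor A V W f (bp A V) = bp A W"
    and IG_space_mor_idm: "V \<in> Obj G \<Longrightarrow> x \<in> topspace (sp A V) \<Longrightarrow> mor A V V (idm (fst V)) x = x"
    and IG_space_mor_matmul: "U \<in> Obj G \<Longrightarrow> V \<in> Obj G \<Longrightarrow> W \<in> Obj G \<Longrightarrow> f \<in> Hom U V \<Longrightarrow>
      h \<in> Hom V W \<Longrightarrow> x \<in> topspace (sp A U) \<Longrightarrow> mor A U W (matmul (fst U) h f) x = mor A V W h (mor A U V f x)"
    and IG_space_mor_conj_hom: "V \<in> Obj G \<Longrightarrow> W \<in> Obj G \<Longrightarrow> g \<in> carrier G \<Longrightarrow> f \<in> Hom V W \<Longrightarrow>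
      x \<in> topspace (sp A V) \<Longrightarrow>
      mor A V W (conj_hom G V W g f) x = act A W g (mor A V W f (act A V (inv\<^bsub>G\<^esub> g) x))"
  using assms unfolding IG_space_def by blast+

lemma IG_space_mor_topspace:
  assumes "IG_space G A" "V \<in> Obj G" "W \<in> Obj G" "f \<in> Hom V W" "x \<in> topspace (sp A V)"
  shows "mor A V W f x \<in> topspace (sp A W)"
  using continuous_map_image_subset_topspace[OF IG_space_continuous_mor[OF assms(1-3)]] assms(4,5)
  by auto

lemma based_Gspace_act_topspace:
  "based_Gspace G X b a \<Longrightarrow> g \<in> carrier G \<Longrightarrow> x \<in> topspace X \<Longrightarrow> a g x \<in> topspace X"
  unfolding based_Gspace_def by (meson continuous_map_image_subset_topspace image_subset_iff)

lemma based_Gspace_act_inv: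
  "group G \<Longrightarrow> based_Gspace G X b a \<Longrightarrow> g \<in> carrier G \<Longrightarrow> x \<in> topspace X \<Longrightarrow> a (inv\<^bsub>G\<^esub> g) (a g x) = x"
  unfolding based_Gspace_def by (metis group.inv_closed group.l_inv)

lemma Res_simps [simp]:
  "Isp (Res G A) n = sp A (trivo G n)" "Ibp (Res G A) n = bp A (trivo G n)"
  "Iact (Res G A) n = act A (trivo G n)" "Imor (Res G A) m n = mor A (trivo G m) (trivo G n)"
  by (simp_all add: Res_def)

lemma topspace_coprod:
  "topspace (coprod G X V) = {(n, s, x). s \<in> Hom (trivo G n) V \<and> x \<in> topspace (Isp X n)}"
  unfolding coprod_def by auto

lemma topspace_E_top: "topspace (E_top G X V) = eclass G X V ` topspace (coprod G X V)"
  unfolding E_top_def by (simp add: topspace_quot_top)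

lemma eclass_eq_iff: "eclass G X V z = eclass G X V z' \<longleftrightarrow> equivclp (erel G X V) z z'"
proof
  assume "eclass G X V z = eclass G X V z'"
  then have "z' \<in> eclass G X V z"
    by (simp add: eclass_def)
  then show "equivclp (erel G X V) z z'"
    by (simp add: eclass_def)
next
  assume "equivclp (erel G X V) z z'"
  then show "eclass G X V z = eclass G X V z'"
    unfolding eclass_def by (auto intro: equivclp_trans equivclp_sym)
qed

lemma E_rep:
  assumes "C \<in> topspace (E_top G X V)"
  shows "E_rep G X V C \<in> topspace (coprod G X V)" and "eclass G X V (E_rep G X V C) = C"
proof -
  have "\<exists>z. z \<in> topspace (coprod G X V) \<and> eclass G X V z = C"
    using assms unfolding topspace_E_top by auto
  then have "E_rep G X V C \<in> topspace (coprod G X V) \<and> eclass G X V (E_rep G X V C) = C"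
    unfolding E_rep_def by (rule someI_ex)
  then show "E_rep G X V C \<in> topspace (coprod G X V)" and "eclass G X V (E_rep G X V C) = C"
    by auto
qed

lemma E_rep_Res_cases:
  assumes "C \<in> topspace (E_top G (Res G A) V)"
  obtains s x where "E_rep G (Res G A) V C = (fst V, s, x)" and "s \<in> Hom (trivo G (fst V)) V"
    and "x \<in> topspace (sp A (trivo G (fst V)))"
proof -
  obtain n s x where rep: "E_rep G (Res G A) V C = (n, s, x)" and s: "s \<in> Hom (trivo G n) V"
    and x: "x \<in> topspace (sp A (trivo G n))"
    using E_rep(1)[OF assms] by (auto simp: topspace_coprod)
  moreover have "n = fst V"
    using Hom_dims[OF s] by simp
  ultimately show thesis
    using that by blast
qed

definition coprod_eval :: "('g, 'b) monoid_scheme \<Rightarrow> ('g, 'a) IGspace \<Rightarrow> 'g obj \<Rightarrow> nat \<times> mat \<times> 'a \<Rightarrow> 'a" where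
  "coprod_eval G A V z = (case z of (n, s, x) \<Rightarrow> mor A (trivo G n) V s x)"

lemma counit_eq_coprod_eval: "counit G A V C = coprod_eval G A V (E_rep G (Res G A) V C)"
  unfolding counit_def coprod_eval_def ..

lemma coprod_eval_equivclp:
  assumes "group G" "IG_space G A" "V \<in> Obj G" "equivclp (erel G (Res G A) V) z z'"
  shows "coprod_eval G A V z = coprod_eval G A V z'"
  using assms(4)
proof (induction rule: equivclp_induct)
  case (step y w)
  have "coprod_eval G A V u = coprod_eval G A V u'" if "erel G (Res G A) V u u'" for u u'
    using that IG_space_mor_matmul[OF assms(2) trivo_Obj[OF assms(1)] trivo_Obj[OF assms(1)] assms(3)]
    by (auto simp: erel_def coprod_eval_def)
  with step show ?case
    by metis
qed simp

lemma counit_eclass: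
  assumes "group G" "IG_space G A" "V \<in> Obj G" "z \<in> topspace (coprod G (Res G A) V)"
  shows "counit G A V (eclass G (Res G A) V z) = coprod_eval G A V z"
proof -
  let ?C = "eclass G (Res G A) V z"
  have "?C \<in> topspace (E_top G (Res G A) V)"
    using assms(4) by (simp add: topspace_E_top)
  then have "equivclp (erel G (Res G A) V) (E_rep G (Res G A) V ?C) z"
    using E_rep(2) eclass_eq_iff by metis
  then show ?thesis
    using coprod_eval_equivclp[OF assms(1-3)] counit_eq_coprod_eval by metis
qed

lemma eclass_Res_idm_rep:
  assumes "group G" "V \<in> Obj G" "s \<in> Hom (trivo G (fst V)) V" "x \<in> topspace (sp A (trivo G (fst V)))"
  shows "eclass G (Res G A) V (fst V, s, x)
       = eclass G (Res G A) V (fst V, idm (fst V), mor A (trivo G (fst V)) (trivo G (fst V)) s x)"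
proof -
  let ?k = "fst V"
  have s: "s \<in> Hom (trivo G ?k) (trivo G ?k)" "s \<in> Orth ?k"
    using assms(3) by (simp_all add: Hom_def)
  have "erel G (Res G A) V (?k, matmul ?k (idm ?k) s, x) (?k, idm ?k, mor A (trivo G ?k) (trivo G ?k) s x)"
    unfolding erel_def using s assms(4) by (auto simp: Hom_def idm_Orth)
  then show ?thesis
    using matmul_idm_left[OF Orth_Mats[OF s(2)]] by (simp add: eclass_eq_iff r_into_equivclp)
qed

definition counit_inv :: "('g, 'b) monoid_scheme \<Rightarrow> ('g, 'a) IGspace \<Rightarrow> 'g obj \<Rightarrow> 'a \<Rightarrow> (nat \<times> mat \<times> 'a) set" where
  "counit_inv G A V a =
     eclass G (Res G A) V (fst V, idm (fst V), mor A V (trivo G (fst V)) (idm (fst V)) a)"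

lemma idm_Hom_trivo: "idm (fst V) \<in> Hom (trivo G (fst V)) V" "idm (fst V) \<in> Hom V (trivo G (fst V))"
  by (simp_all add: Hom_def idm_Orth)

lemma continuous_map_counit:
  assumes "group G" "IG_space G A" "V \<in> Obj G"
  shows "continuous_map (E_top G (Res G A) V) (sp A V) (counit G A V)"
  unfolding E_top_def
proof (rule continuous_map_from_quot_top)
  show "continuous_map (coprod G (Res G A) V) (sp A V) (coprod_eval G A V)"
    unfolding coprod_def
  proof (rule continuous_map_from_sum_topology)
    fix n :: nat
    have "(\<lambda>y. coprod_eval G A V (n, y)) = (\<lambda>(f, x). mor A (trivo G n) V f x)"
      by (auto simp: coprod_eval_def)
    then show "continuous_map (prod_topology (Hom_top (trivo G n) V) (Isp (Res G A) n)) (sp A V)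
        (\<lambda>y. coprod_eval G A V (n, y))"
      using IG_space_continuous_mor[OF assms(2) trivo_Obj[OF assms(1)] assms(3)] by simp
  qed
qed (rule counit_eclass[OF assms])

lemma continuous_map_counit_inv:
  assumes "group G" "IG_space G A" "V \<in> Obj G"
  shows "continuous_map (sp A V) (E_top G (Res G A) V) (counit_inv G A V)"
proof -
  let ?k = "fst V"
  have mor: "continuous_map (sp A V) (sp A (trivo G ?k)) (mor A V (trivo G ?k) (idm ?k))"
  proof -
    have "continuous_map (sp A V) (prod_topology (Hom_top V (trivo G ?k)) (sp A V)) (\<lambda>a. (idm ?k, a))"
      using idm_Hom_trivo[of V G] by (intro continuous_map_pairedI) auto
    from continuous_map_compose[OF this IG_space_continuous_mor[OF assms(2,3) trivo_Obj[OF assms(1)]]]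
    show ?thesis
      by (simp add: o_def)
  qed
  have "continuous_map (sp A V) (prod_topology (Hom_top (trivo G ?k) V) (Isp (Res G A) ?k))
      (\<lambda>a. (idm ?k, mor A V (trivo G ?k) (idm ?k) a))"
    using idm_Hom_trivo[of V G] mor by (intro continuous_map_pairedI) auto
  then have "continuous_map (sp A V) (coprod G (Res G A) V)
      (\<lambda>a. (?k, idm ?k, mor A V (trivo G ?k) (idm ?k) a))"
    unfolding coprod_def
    using continuous_map_compose[OF _ continuous_map_component_injection[OF UNIV_I]]
    by (simp add: o_def)
  from continuous_map_compose[OF this quotient_imp_continuous_map[OF quotient_map_quot_top]]
  show ?thesis
    unfolding E_top_def counit_inv_def by (simp add: o_def)
qed

lemma counit_inv_counit:
  assumes "group G" "IG_space G A" "V \<in> Obj G" "C \<in> topspace (E_top G (Res G A) V)"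
  shows "counit_inv G A V (counit G A V C) = C"
proof -
  let ?k = "fst V" and ?T = "trivo G (fst V)"
  obtain s x where rep: "E_rep G (Res G A) V C = (?k, s, x)"
    and s: "s \<in> Hom ?T V" and x: "x \<in> topspace (sp A ?T)"
    using E_rep_Res_cases[OF assms(4)] .
  have s_Orth: "s \<in> Orth ?k"
    using s by (simp add: Hom_def)
  have "counit_inv G A V (counit G A V C)
      = eclass G (Res G A) V (?k, idm ?k, mor A V ?T (idm ?k) (mor A ?T V s x))"
    by (simp add: counit_inv_def counit_eq_coprod_eval rep coprod_eval_def)
  also have "\<dots> = eclass G (Res G A) V (?k, idm ?k, mor A ?T ?T (matmul ?k (idm ?k) s) x)"
    using IG_space_mor_matmul[OF assms(2) trivo_Obj[OF assms(1)] assms(3) trivo_Obj[OF assms(1)]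
        s idm_Hom_trivo(2) x] by simp
  also have "\<dots> = eclass G (Res G A) V (?k, s, x)"
    using eclass_Res_idm_rep[OF assms(1,3) s x] matmul_idm_left[OF Orth_Mats[OF s_Orth]] by simp
  also have "\<dots> = C"
    using E_rep(2)[OF assms(4)] rep by simp
  finally show ?thesis .
qed

lemma counit_counit_inv:
  assumes "group G" "IG_space G A" "V \<in> Obj G" "a \<in> topspace (sp A V)"
  shows "counit G A V (counit_inv G A V a) = a"
proof -
  let ?k = "fst V" and ?T = "trivo G (fst V)"
  have "(?k, idm ?k, mor A V ?T (idm ?k) a) \<in> topspace (coprod G (Res G A) V)"
    using IG_space_mor_topspace[OF assms(2,3) trivo_Obj[OF assms(1)] idm_Hom_trivo(2) assms(4)]
      idm_Hom_trivo(1) by (simp add: topspace_coprod)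
  then have "counit G A V (counit_inv G A V a) = mor A ?T V (idm ?k) (mor A V ?T (idm ?k) a)"
    by (simp add: counit_inv_def counit_eclass[OF assms(1-3)] coprod_eval_def)
  also have "\<dots> = mor A V V (matmul ?k (idm ?k) (idm ?k)) a"
    using IG_space_mor_matmul[OF assms(2,3) trivo_Obj[OF assms(1)] assms(3) idm_Hom_trivo(2,1) assms(4)]
    by simp
  also have "\<dots> = a"
    using matmul_idm_left[OF idm_Mats] IG_space_mor_idm[OF assms(2,3,4)] by simp
  finally show ?thesis .
qed

lemma homeomorphic_map_counit:
  assumes "group G" "IG_space G A" "V \<in> Obj G"
  shows "homeomorphic_map (E_top G (Res G A) V) (sp A V) (counit G A V)"
  unfolding homeomorphic_map_maps homeomorphic_maps_def
  using continuous_map_counit[OF assms] continuous_map_counit_inv[OF assms]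
    counit_inv_counit[OF assms] counit_counit_inv[OF assms] by blast

lemma counit_E_bp:
  assumes "group G" "IG_space G A" "V \<in> Obj G"
  shows "counit G A V (E_bp G (Res G A) V) = bp A V"
proof -
  let ?k = "fst V" and ?T = "trivo G (fst V)"
  have "bp A ?T \<in> topspace (sp A ?T)"
    using IG_space_based[OF assms(2) trivo_Obj[OF assms(1)]] by (simp add: based_Gspace_def)
  then have "(?k, idm ?k, bp A ?T) \<in> topspace (coprod G (Res G A) V)"
    using idm_Hom_trivo(1) by (simp add: topspace_coprod)
  then have "counit G A V (E_bp G (Res G A) V) = mor A ?T V (idm ?k) (bp A ?T)"
    by (simp add: E_bp_def counit_eclass[OF assms] coprod_eval_def)
  also have "\<dots> = bp A V"
    by (rule IG_space_mor_bp[OF assms(2) trivo_Obj[OF assms(1)] assms(3) idm_Hom_trivo(1)])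
  finally show ?thesis .
qed

lemma counit_E_act:
  assumes "group G" "IG_space G A" "V \<in> Obj G" "g \<in> carrier G"
    and "C \<in> topspace (E_top G (Res G A) V)"
  shows "counit G A V (E_act G (Res G A) V g C) = act A V g (counit G A V C)"
proof -
  let ?k = "fst V" and ?T = "trivo G (fst V)"
  obtain s x where rep: "E_rep G (Res G A) V C = (?k, s, x)"
    and s: "s \<in> Hom ?T V" and x: "x \<in> topspace (sp A ?T)"
    using E_rep_Res_cases[OF assms(5)] .
  have based: "based_Gspace G (sp A ?T) (bp A ?T) (act A ?T)"
    by (rule IG_space_based[OF assms(2) trivo_Obj[OF assms(1)]])
  have gx: "act A ?T g x \<in> topspace (sp A ?T)"
    by (rule based_Gspace_act_topspace[OF based assms(4) x])
  have "snd V g \<in> Orth ?k" "s \<in> Orth ?k"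
    using assms(3,4) s by (auto simp: Obj_def Hom_def)
  then have "conj_hom G ?T V g s \<in> Hom ?T V"
    using snd_trivo[OF group.inv_closed[OF assms(1,4)]]
    by (simp add: conj_hom_def Hom_def matmul_idm_right Orth_Mats matmul_Orth)
  then have "counit G A V (E_act G (Res G A) V g C) = mor A ?T V (conj_hom G ?T V g s) (act A ?T g x)"
    using gx by (simp add: E_act_def rep counit_eclass[OF assms(1-3)] topspace_coprod coprod_eval_def)
  also have "\<dots> = act A V g (mor A ?T V s x)"
    using IG_space_mor_conj_hom[OF assms(2) trivo_Obj[OF assms(1)] assms(3,4) s gx]
      based_Gspace_act_inv[OF assms(1) based assms(4) x] by simp
  also have "\<dots> = act A V g (counit G A V C)"
    by (simp add: counit_eq_coprod_eval rep coprod_eval_def)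
  finally show ?thesis .
qed

lemma counit_E_mor:
  assumes "group G" "IG_space G A" "V \<in> Obj G" "W \<in> Obj G" "f \<in> Hom V W"
    and "C \<in> topspace (E_top G (Res G A) V)"
  shows "counit G A W (E_mor G (Res G A) V W f C) = mor A V W f (counit G A V C)"
proof -
  let ?k = "fst V" and ?T = "trivo G (fst V)"
  obtain s x where rep: "E_rep G (Res G A) V C = (?k, s, x)"
    and s: "s \<in> Hom ?T V" and x: "x \<in> topspace (sp A ?T)"
    using E_rep_Res_cases[OF assms(6)] .
  have "fst W = ?k" "f \<in> Orth ?k" "s \<in> Orth ?k"
    using Hom_dims[OF assms(5)] s by (auto simp: Hom_def)
  then have "matmul ?k f s \<in> Hom ?T W"
    by (simp add: Hom_def matmul_Orth)
  then have "counit G A W (E_mor G (Res G A) V W f C) = mor A ?T W (matmul ?k f s) x"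
    using x by (simp add: E_mor_def rep counit_eclass[OF assms(1,2,4)] topspace_coprod coprod_eval_def)
  also have "\<dots> = mor A V W f (mor A ?T V s x)"
    using IG_space_mor_matmul[OF assms(2) trivo_Obj[OF assms(1)] assms(3,4) s assms(5) x] by simp
  also have "\<dots> = mor A V W f (counit G A V C)"
    by (simp add: counit_eq_coprod_eval rep coprod_eval_def)
  finally show ?thesis .
qed

lemma counit_ER_map:
  assumes "group G" "IG_space G B" "IG_morph G A B \<phi>" "V \<in> Obj G"
    and "C \<in> topspace (E_top G (Res G A) V)"
  shows "counit G B V (ER_map G A B \<phi> V C) = \<phi> V (counit G A V C)"
proof -
  let ?k = "fst V" and ?T = "trivo G (fst V)"
  obtain s x where rep: "E_rep G (Res G A) V C = (?k, s, x)"
    and s: "s \<in> Hom ?T V" and x: "x \<in> topspace (sp A ?T)"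
    using E_rep_Res_cases[OF assms(5)] .
  have "continuous_map (sp A ?T) (sp B ?T) (\<phi> ?T)"
    and natural: "\<phi> V (mor A ?T V s x) = mor B ?T V s (\<phi> ?T x)"
    using assms(3) trivo_Obj[OF assms(1)] assms(4) s x unfolding IG_morph_def by blast+
  then have "\<phi> ?T x \<in> topspace (sp B ?T)"
    using x by (meson continuous_map_image_subset_topspace image_subset_iff)
  then have "counit G B V (ER_map G A B \<phi> V C) = mor B ?T V s (\<phi> ?T x)"
    using s by (simp add: ER_map_def rep counit_eclass[OF assms(1,2,4)] topspace_coprod coprod_eval_def)
  also have "\<dots> = \<phi> V (counit G A V C)"
    by (simp add: natural counit_eq_coprod_eval rep coprod_eval_def)
  finally show ?thesis .
qed

theorem lemmaA6:
  fixes G :: "('g, 'b) monoid_scheme"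
    and A :: "('g, 'a) IGspace"
    and B :: "('g, 'c) IGspace"
  assumes "group G" and "finite (carrier G)" and "IG_space G A"
  shows "(\<forall>V\<in>Obj G.
            homeomorphic_map (E_top G (Res G A) V) (sp A V) (counit G A V) \<and>
            counit G A V (E_bp G (Res G A) V) = bp A V \<and>
            (\<forall>g\<in>carrier G. \<forall>C\<in>topspace (E_top G (Res G A) V).
               counit G A V (E_act G (Res G A) V g C) = act A V g (counit G A V C))) \<and>
         (\<forall>V\<in>Obj G. \<forall>W\<in>Obj G. \<forall>f\<in>Hom V W. \<forall>C\<in>topspace (E_top G (Res G A) V).
            counit G A W (E_mor G (Res G A) V W f C) = mor A V W f (counit G A V C)) \<and>
         (\<forall>\<phi>. IG_space G B \<and> IG_morph G A B \<phi> \<longrightarrow>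
            (\<forall>V\<in>Obj G. \<forall>C\<in>topspace (E_top G (Res G A) V).
               counit G B V (ER_map G A B \<phi> V C) = \<phi> V (counit G A V C)))"
  using homeomorphic_map_counit[OF assms(1,3)] counit_E_bp[OF assms(1,3)]
    counit_E_act[OF assms(1,3)] counit_E_mor[OF assms(1,3)] counit_ER_map[OF assms(1)]
  by blast

end
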